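(* Let $m$ be a monad and $\mathrm{ExceptT}\ e\ m\ a = m\ (\mathrm{Either}\ e\ a)$ with operations $\mathrm{return}$, $\gg\!=$, $\mathrm{throwE}$, $\mathrm{catchE}$ as defined in the context. Then $\mathrm{ExceptT}\ \cdot\ m\ \cdot$ is a conjoinedly monadic error algebra with $(\mathrm{return}, \gg\!=)$ in the second index and $(\mathrm{throwE}, \mathrm{catchE})$ in the first index. Consequently (taking $m$ to be the identity monad) the type constructor $\mathrm{Either}$, with $\mathrm{return} = \mathrm{Right}$, $\mathrm{Right}\ r \gg\!= k = k\ r$, $\mathrm{Left}\ l \gg\!= k = \mathrm{Left}\ l$, $\mathrm{throw} = \mathrm{Left}$, $\mathrm{catch}\ (\mathrm{Left}\ e)\ h = h\ e$, $\mathrm{catch}\ (\mathrm{Right}\ a)\ h = \mathrm{Right}\ a$, is also a conjoinedly monadic error algebra.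
   Context: Operations on $\mathrm{ExceptT}$ (with $\mathrm{return}_m$, $\gg\!=_m$ the monad operations of $m$): $\mathrm{return}\ a = \mathrm{return}_m\ (\mathrm{Right}\ a)$; $x \gg\!= k = x \gg\!=_m (\lambda v.\ \mathbf{case}\ v\ \mathbf{of}\ \{\mathrm{Left}\ e \to \mathrm{return}_m\ (\mathrm{Left}\ e);\ \mathrm{Right}\ r \to k\ r\})$; $\mathrm{throwE}\ e = \mathrm{return}_m\ (\mathrm{Left}\ e)$; $\mathrm{catchE} : \mathrm{ExceptT}\ e\ m\ a \to (e \to \mathrm{ExceptT}\ f\ m\ a) \to \mathrm{ExceptT}\ f\ m\ a$, $\mathrm{catchE}\ x\ h = x \gg\!=_m (\lambda v.\ \mathbf{case}\ v\ \mathbf{of}\ \{\mathrm{Left}\ l \to h\ l;\ \mathrm{Right}\ r \to \mathrm{return}_m\ (\mathrm{Right}\ r)\})$. A conjoinedly monadic error algebra is a type constructor $M$ of two type arguments (error index $e$, value index $a$) with operations $\mathrm{return} : a \to M\ e\ a$, $(\gg\!=) : M\ e\ a \to (a \to M\ e\ b) \to M\ e\ b$, $\mathrm{throw} : e \to M\ e\ a$, $\mathrm{catch} : M\ e\ a \to (e \to M\ f\ a) \to M\ f\ a$ such that: for every fixed $e$, $(\mathrm{return}, \gg\!=)$ satisfy the monad laws in $a$ ($\mathrm{return}\ x \gg\!= f = f\ x$, $p \gg\!= \mathrm{return} = p$, $(p \gg\!= g)\gg\!= h = p \gg\!= (\lambda x.\ g\ x \gg\!= h)$); for every fixed $a$,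 $(\mathrm{throw}, \mathrm{catch})$ satisfy the monad laws in $e$ ($\mathrm{catch}\ (\mathrm{throw}\ e)\ h = h\ e$, $\mathrm{catch}\ p\ \mathrm{throw} = p$, $\mathrm{catch}\ (\mathrm{catch}\ p\ g)\ h = \mathrm{catch}\ p\ (\lambda x.\ \mathrm{catch}\ (g\ x)\ h)$); and $\mathrm{catch}\ (\mathrm{return}\ x)\ f = \mathrm{return}\ x$ and $\mathrm{throw}\ e \gg\!= f = \mathrm{throw}\ e$. Equality is extensional. *)

theory Defs
  imports Main
begin

text \<open>Either e a is rendered as the sum type 'e + 'a, with Left = Inl and Right = Inr.\<close>

text \<open>Monad laws for a monad m restricted to three element types X1, X2, X3:
  ri :: Xi => m Xi are the instances of return_m, bij :: m Xi => (Xi => m Xj) => m Xj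
  the instances of bind_m.\<close>

definition monad_on3 ::
  "('x1 \<Rightarrow> 'm1) \<Rightarrow> ('x2 \<Rightarrow> 'm2) \<Rightarrow> ('x3 \<Rightarrow> 'm3) \<Rightarrow> ('m1 \<Rightarrow> ('x1 \<Rightarrow> 'm1) \<Rightarrow> 'm1) \<Rightarrow> ('m1 \<Rightarrow> ('x1 \<Rightarrow> 'm2) \<Rightarrow> 'm2) \<Rightarrow> ('m1 \<Rightarrow> ('x1 \<Rightarrow> 'm3) \<Rightarrow> 'm3) \<Rightarrow> ('m2 \<Rightarrow> ('x2 \<Rightarrow> 'm1) \<Rightarrow> 'm1) \<Rightarrow> ('m2 \<Rightarrow> ('x2 \<Rightarrow> 'm2) \<Rightarrow> 'm2) \<Rightarrow> ('m2 \<Rightarrow> ('x2 \<Rightarrow> 'm3) \<Rightarrow> 'm3) \<Rightarrow> ('m3 \<Rightarrow> ('x3 \<Rightarrow> 'm1) \<Rightarrow> 'm1) \<Rightarrow> ('m3 \<Rightarrow> ('x3 \<Rightarrow> 'm2) \<Rightarrow> 'm2) \<Rightarrow> ('m3 \<Rightarrow> ('x3 \<Rightarrow> 'm3) \<Rightarrow> 'm3) \<Rightarrow> bool" where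
  "monad_on3 r1 r2 r3 b11 b12 b13 b21 b22 b23 b31 b32 b33 \<longleftrightarrow>
   (\<forall>x f. b11 (r1 x) f = f x) \<and>
   (\<forall>x f. b12 (r1 x) f = f x) \<and>
   (\<forall>x f. b13 (r1 x) f = f x) \<and>
   (\<forall>x f. b21 (r2 x) f = f x) \<and>
   (\<forall>x f. b22 (r2 x) f = f x) \<and>
   (\<forall>x f. b23 (r2 x) f = f x) \<and>
   (\<forall>x f. b31 (r3 x) f = f x) \<and>
   (\<forall>x f. b32 (r3 x) f = f x) \<and>
   (\<forall>x f. b33 (r3 x) f = f x) \<and>
   (\<forall>p. b11 p r1 = p) \<and>
   (\<forall>p. b22 p r2 = p) \<and>
   (\<forall>p. b33 p r3 = p) \<and>
   (\<forall>p g h. b11 (b11 p g) h = b11 p (\<lambda>x. b11 (g x) h)) \<and>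
   (\<forall>p g h. b12 (b11 p g) h = b12 p (\<lambda>x. b12 (g x) h)) \<and>
   (\<forall>p g h. b13 (b11 p g) h = b13 p (\<lambda>x. b13 (g x) h)) \<and>
   (\<forall>p g h. b21 (b12 p g) h = b11 p (\<lambda>x. b21 (g x) h)) \<and>
   (\<forall>p g h. b22 (b12 p g) h = b12 p (\<lambda>x. b22 (g x) h)) \<and>
   (\<forall>p g h. b23 (b12 p g) h = b13 p (\<lambda>x. b23 (g x) h)) \<and>
   (\<forall>p g h. b31 (b13 p g) h = b11 p (\<lambda>x. b31 (g x) h)) \<and>
   (\<forall>p g h. b32 (b13 p g) h = b12 p (\<lambda>x. b32 (g x) h)) \<and>
   (\<forall>p g h. b33 (b13 p g) h = b13 p (\<lambda>x. b33 (g x) h)) \<and>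
   (\<forall>p g h. b11 (b21 p g) h = b21 p (\<lambda>x. b11 (g x) h)) \<and>
   (\<forall>p g h. b12 (b21 p g) h = b22 p (\<lambda>x. b12 (g x) h)) \<and>
   (\<forall>p g h. b13 (b21 p g) h = b23 p (\<lambda>x. b13 (g x) h)) \<and>
   (\<forall>p g h. b21 (b22 p g) h = b21 p (\<lambda>x. b21 (g x) h)) \<and>
   (\<forall>p g h. b22 (b22 p g) h = b22 p (\<lambda>x. b22 (g x) h)) \<and>
   (\<forall>p g h. b23 (b22 p g) h = b23 p (\<lambda>x. b23 (g x) h)) \<and>
   (\<forall>p g h. b31 (b23 p g) h = b21 p (\<lambda>x. b31 (g x) h)) \<and>
   (\<forall>p g h. b32 (b23 p g) h = b22 p (\<lambda>x. b32 (g x) h)) \<and>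
   (\<forall>p g h. b33 (b23 p g) h = b23 p (\<lambda>x. b33 (g x) h)) \<and>
   (\<forall>p g h. b11 (b31 p g) h = b31 p (\<lambda>x. b11 (g x) h)) \<and>
   (\<forall>p g h. b12 (b31 p g) h = b32 p (\<lambda>x. b12 (g x) h)) \<and>
   (\<forall>p g h. b13 (b31 p g) h = b33 p (\<lambda>x. b13 (g x) h)) \<and>
   (\<forall>p g h. b21 (b32 p g) h = b31 p (\<lambda>x. b21 (g x) h)) \<and>
   (\<forall>p g h. b22 (b32 p g) h = b32 p (\<lambda>x. b22 (g x) h)) \<and>
   (\<forall>p g h. b23 (b32 p g) h = b33 p (\<lambda>x. b23 (g x) h)) \<and>
   (\<forall>p g h. b31 (b33 p g) h = b31 p (\<lambda>x. b31 (g x) h)) \<and>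
   (\<forall>p g h. b32 (b33 p g) h = b32 p (\<lambda>x. b32 (g x) h)) \<and>
   (\<forall>p g h. b33 (b33 p g) h = b33 p (\<lambda>x. b33 (g x) h))"

definition exc_return :: "('e + 'a \<Rightarrow> 'm) \<Rightarrow> 'a \<Rightarrow> 'm" where
  "exc_return retm a = retm (Inr a)"

definition exc_bind ::
  "('m1 \<Rightarrow> ('e + 'a \<Rightarrow> 'm2) \<Rightarrow> 'm2) \<Rightarrow> ('e + 'b \<Rightarrow> 'm2) \<Rightarrow> 'm1 \<Rightarrow> ('a \<Rightarrow> 'm2) \<Rightarrow> 'm2" where
  "exc_bind bindm retm x k = bindm x (\<lambda>v. case v of Inl e \<Rightarrow> retm (Inl e) | Inr r \<Rightarrow> k r)"

definition exc_throw :: "('e + 'a \<Rightarrow> 'm) \<Rightarrow> 'e \<Rightarrow> 'm" where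
  "exc_throw retm e = retm (Inl e)"

definition exc_catch ::
  "('m1 \<Rightarrow> ('e + 'a \<Rightarrow> 'm2) \<Rightarrow> 'm2) \<Rightarrow> ('f + 'a \<Rightarrow> 'm2) \<Rightarrow> 'm1 \<Rightarrow> ('e \<Rightarrow> 'm2) \<Rightarrow> 'm2" where
  "exc_catch bindm retm x h = bindm x (\<lambda>v. case v of Inl l \<Rightarrow> h l | Inr r \<Rightarrow> retm (Inr r))"

fun either_bind :: "'e + 'a \<Rightarrow> ('a \<Rightarrow> 'e + 'b) \<Rightarrow> 'e + 'b" where
  "either_bind (Inr r) k = k r"
| "either_bind (Inl l) k = Inl l"

fun either_catch :: "'e + 'a \<Rightarrow> ('e \<Rightarrow> 'f + 'a) \<Rightarrow> 'f + 'a" where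
  "either_catch (Inl e) h = h e"
| "either_catch (Inr a) h = Inr a"

text \<open>The laws of a conjoinedly monadic error algebra M, stated for the instances of the
  operations at error types e, f, g and value types a, b, c (all arbitrary):
  ret_ea : a => M e a, ret_fa : a => M f a, bind_XY : M X => (.. => M Y) => M Y,
  throw_ea : e => M e a, throw_eb : e => M e b, catch_XY : M X => (.. => M Y) => M Y.\<close>

definition cmea_laws where
  "cmea_laws
     (ret_ea :: 'a \<Rightarrow> 'Mea) (ret_fa :: 'a \<Rightarrow> 'Mfa)
     (bind_ea_eb :: 'Mea \<Rightarrow> ('a \<Rightarrow> 'Meb) \<Rightarrow> 'Meb)
     (bind_eb_ec :: 'Meb \<Rightarrow> ('b \<Rightarrow> 'Mec) \<Rightarrow> 'Mec)
     (bind_ea_ec :: 'Mea \<Rightarrow> ('a \<Rightarrow> 'Mec) \<Rightarrow> 'Mec)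
     (bind_ea_ea :: 'Mea \<Rightarrow> ('a \<Rightarrow> 'Mea) \<Rightarrow> 'Mea)
     (throw_ea :: 'e \<Rightarrow> 'Mea) (throw_eb :: 'e \<Rightarrow> 'Meb)
     (catch_ea_fa :: 'Mea \<Rightarrow> ('e \<Rightarrow> 'Mfa) \<Rightarrow> 'Mfa)
     (catch_fa_ga :: 'Mfa \<Rightarrow> ('f \<Rightarrow> 'Mga) \<Rightarrow> 'Mga)
     (catch_ea_ga :: 'Mea \<Rightarrow> ('e \<Rightarrow> 'Mga) \<Rightarrow> 'Mga)
     (catch_ea_ea :: 'Mea \<Rightarrow> ('e \<Rightarrow> 'Mea) \<Rightarrow> 'Mea)
   \<longleftrightarrow>
     (\<forall>x f. bind_ea_eb (ret_ea x) f = f x) \<and>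
     (\<forall>p. bind_ea_ea p ret_ea = p) \<and>
     (\<forall>p g h. bind_eb_ec (bind_ea_eb p g) h = bind_ea_ec p (\<lambda>x. bind_eb_ec (g x) h)) \<and>
     (\<forall>e h. catch_ea_fa (throw_ea e) h = h e) \<and>
     (\<forall>p. catch_ea_ea p throw_ea = p) \<and>
     (\<forall>p g h. catch_fa_ga (catch_ea_fa p g) h = catch_ea_ga p (\<lambda>x. catch_fa_ga (g x) h)) \<and>
     (\<forall>x f. catch_ea_fa (ret_ea x) f = ret_fa x) \<and>
     (\<forall>e f. bind_ea_eb (throw_ea e) f = throw_eb e)"

end

theory Submission
  imports Defs
begin

text \<open>Each law of ExceptT reduces, after unfolding, to one law of the underlying monad m
  followed by a case split on the Either value that m carries. Either itself is ExceptT over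
  the identity monad, so its laws are an instance.\<close>

lemma exc_bind_return_left:
  assumes "\<And>v f. bindm (retm v) f = f v"
  shows "exc_bind bindm retm' (exc_return retm x) k = k x"
  using assms by (simp add: exc_bind_def exc_return_def)

lemma exc_bind_return_right:
  assumes "bindm p retm = p"
  shows "exc_bind bindm retm p (exc_return retm) = p"
proof -
  have "(\<lambda>v. case v of Inl e \<Rightarrow> retm (Inl e) | Inr r \<Rightarrow> exc_return retm r) = retm"
    by (rule ext) (simp add: exc_return_def split: sum.split)
  then show ?thesis
    using assms by (simp add: exc_bind_def)
qed

lemma exc_bind_assoc:
  assumes assoc: "\<And>g h. b23 (b12 p g) h = b13 p (\<lambda>x. b23 (g x) h)"
    and return_left: "\<And>v f. b23 (r2 v) f = f v"
  shows "exc_bind b23 r3 (exc_bind b12 r2 p g) h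
       = exc_bind b13 r3 p (\<lambda>x. exc_bind b23 r3 (g x) h)"
proof -
  have "exc_bind b23 r3 (exc_bind b12 r2 p g) h
      = b13 p (\<lambda>v. b23 (case v of Inl e \<Rightarrow> r2 (Inl e) | Inr r \<Rightarrow> g r)
                 (\<lambda>v. case v of Inl e \<Rightarrow> r3 (Inl e) | Inr r \<Rightarrow> h r))"
    by (simp add: exc_bind_def assoc)
  also have "\<dots> = exc_bind b13 r3 p (\<lambda>x. exc_bind b23 r3 (g x) h)"
    unfolding exc_bind_def[of b13]
    by (rule arg_cong[where f = "b13 p"])
      (simp add: fun_eq_iff return_left exc_bind_def split: sum.split)
  finally show ?thesis .
qed

lemma exc_bind_throw:
  assumes "\<And>v f. bindm (retm v) f = f v"
  shows "exc_bind bindm retm' (exc_throw retm e) k = exc_throw retm' e"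
  using assms by (simp add: exc_bind_def exc_throw_def)

lemma exc_catch_throw_left:
  assumes "\<And>v f. bindm (retm v) f = f v"
  shows "exc_catch bindm retm' (exc_throw retm e) h = h e"
  using assms by (simp add: exc_catch_def exc_throw_def)

lemma exc_catch_throw_right:
  assumes "bindm p retm = p"
  shows "exc_catch bindm retm p (exc_throw retm) = p"
proof -
  have "(\<lambda>v. case v of Inl l \<Rightarrow> exc_throw retm l | Inr r \<Rightarrow> retm (Inr r)) = retm"
    by (rule ext) (simp add: exc_throw_def split: sum.split)
  then show ?thesis
    using assms by (simp add: exc_catch_def)
qed

lemma exc_catch_assoc:
  assumes assoc: "\<And>g h. b45 (b14 p g) h = b15 p (\<lambda>x. b45 (g x) h)"
    and return_left: "\<And>v f. b45 (r4 v) f = f v"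
  shows "exc_catch b45 r5 (exc_catch b14 r4 p g) h
       = exc_catch b15 r5 p (\<lambda>x. exc_catch b45 r5 (g x) h)"
proof -
  have "exc_catch b45 r5 (exc_catch b14 r4 p g) h
      = b15 p (\<lambda>v. b45 (case v of Inl l \<Rightarrow> g l | Inr r \<Rightarrow> r4 (Inr r))
                 (\<lambda>v. case v of Inl l \<Rightarrow> h l | Inr r \<Rightarrow> r5 (Inr r)))"
    by (simp add: exc_catch_def assoc)
  also have "\<dots> = exc_catch b15 r5 p (\<lambda>x. exc_catch b45 r5 (g x) h)"
    unfolding exc_catch_def[of b15]
    by (rule arg_cong[where f = "b15 p"])
      (simp add: fun_eq_iff return_left exc_catch_def split: sum.split)
  finally show ?thesis .
qed

lemma exc_catch_return:
  assumes "\<And>v f. bindm (retm v) f = f v"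
  shows "exc_catch bindm retm' (exc_return retm x) h = exc_return retm' x"
  using assms by (simp add: exc_catch_def exc_return_def)

lemma cmea_laws_exceptT:
  assumes m: "monad_on3 r1 r2 r3 b11 b12 b13 b21 b22 b23 b31 b32 b33"
    and m': "monad_on3 r1 r4 r5 b11 b14 b15 b41 b44 b45 b51 b54 b55"
  shows "cmea_laws (exc_return r1) (exc_return r4)
           (exc_bind b12 r2) (exc_bind b23 r3) (exc_bind b13 r3) (exc_bind b11 r1)
           (exc_throw r1) (exc_throw r2)
           (exc_catch b14 r4) (exc_catch b45 r5) (exc_catch b15 r5) (exc_catch b11 r1)"
  unfolding cmea_laws_def
  using m m' unfolding monad_on3_def
  by (simp add: exc_bind_return_left exc_bind_return_right exc_bind_assoc exc_bind_throw
      exc_catch_throw_left exc_catch_throw_right exc_catch_assoc exc_catch_return)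

lemma monad_on3_identity:
  "monad_on3 id id id (\<lambda>x f. f x) (\<lambda>x f. f x) (\<lambda>x f. f x) (\<lambda>x f. f x) (\<lambda>x f. f x)
     (\<lambda>x f. f x) (\<lambda>x f. f x) (\<lambda>x f. f x) (\<lambda>x f. f x)"
  by (simp add: monad_on3_def)

lemma exc_return_identity: "exc_return id = Inr"
  by (simp add: exc_return_def fun_eq_iff)

lemma exc_throw_identity: "exc_throw id = Inl"
  by (simp add: exc_throw_def fun_eq_iff)

lemma exc_bind_identity: "exc_bind (\<lambda>x f. f x) id = either_bind"
  by (simp add: exc_bind_def fun_eq_iff split: sum.split)

lemma exc_catch_identity: "exc_catch (\<lambda>x f. f x) id = either_catch"
  by (simp add: exc_catch_def fun_eq_iff split: sum.split)

lemma cmea_laws_either: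
  "cmea_laws (Inr :: 'a \<Rightarrow> 'e + 'a) (Inr :: 'a \<Rightarrow> 'f + 'a)
     (either_bind :: 'e + 'a \<Rightarrow> ('a \<Rightarrow> 'e + 'b) \<Rightarrow> 'e + 'b)
     (either_bind :: 'e + 'b \<Rightarrow> ('b \<Rightarrow> 'e + 'c) \<Rightarrow> 'e + 'c)
     (either_bind :: 'e + 'a \<Rightarrow> ('a \<Rightarrow> 'e + 'c) \<Rightarrow> 'e + 'c)
     (either_bind :: 'e + 'a \<Rightarrow> ('a \<Rightarrow> 'e + 'a) \<Rightarrow> 'e + 'a)
     (Inl :: 'e \<Rightarrow> 'e + 'a) (Inl :: 'e \<Rightarrow> 'e + 'b)
     (either_catch :: 'e + 'a \<Rightarrow> ('e \<Rightarrow> 'f + 'a) \<Rightarrow> 'f + 'a)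
     (either_catch :: 'f + 'a \<Rightarrow> ('f \<Rightarrow> 'g + 'a) \<Rightarrow> 'g + 'a)
     (either_catch :: 'e + 'a \<Rightarrow> ('e \<Rightarrow> 'g + 'a) \<Rightarrow> 'g + 'a)
     (either_catch :: 'e + 'a \<Rightarrow> ('e \<Rightarrow> 'e + 'a) \<Rightarrow> 'e + 'a)"
  using cmea_laws_exceptT[OF monad_on3_identity monad_on3_identity]
  by (simp only: exc_return_identity exc_throw_identity exc_bind_identity exc_catch_identity)

theorem theorem4:
  fixes r1 :: "'e + 'a \<Rightarrow> 'm1" and r2 :: "'e + 'b \<Rightarrow> 'm2" and r3 :: "'e + 'c \<Rightarrow> 'm3"
    and r4 :: "'f + 'a \<Rightarrow> 'm4" and r5 :: "'g + 'a \<Rightarrow> 'm5"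
  assumes "monad_on3 r1 r2 r3 b11 b12 b13 b21 b22 b23 b31 b32 b33"
      and "monad_on3 r1 r4 r5 b11 b14 b15 b41 b44 b45 b51 b54 b55"
  shows "cmea_laws (exc_return r1) (exc_return r4)
           (exc_bind b12 r2) (exc_bind b23 r3) (exc_bind b13 r3) (exc_bind b11 r1)
           (exc_throw r1) (exc_throw r2)
           (exc_catch b14 r4) (exc_catch b45 r5) (exc_catch b15 r5) (exc_catch b11 r1)
       \<and> cmea_laws (Inr :: 'a \<Rightarrow> 'e + 'a) (Inr :: 'a \<Rightarrow> 'f + 'a)
           (either_bind :: 'e + 'a \<Rightarrow> ('a \<Rightarrow> 'e + 'b) \<Rightarrow> 'e + 'b)
           (either_bind :: 'e + 'b \<Rightarrow> ('b \<Rightarrow> 'e + 'c) \<Rightarrow> 'e + 'c)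
           (either_bind :: 'e + 'a \<Rightarrow> ('a \<Rightarrow> 'e + 'c) \<Rightarrow> 'e + 'c)
           (either_bind :: 'e + 'a \<Rightarrow> ('a \<Rightarrow> 'e + 'a) \<Rightarrow> 'e + 'a)
           (Inl :: 'e \<Rightarrow> 'e + 'a) (Inl :: 'e \<Rightarrow> 'e + 'b)
           (either_catch :: 'e + 'a \<Rightarrow> ('e \<Rightarrow> 'f + 'a) \<Rightarrow> 'f + 'a)
           (either_catch :: 'f + 'a \<Rightarrow> ('f \<Rightarrow> 'g + 'a) \<Rightarrow> 'g + 'a)
           (either_catch :: 'e + 'a \<Rightarrow> ('e \<Rightarrow> 'g + 'a) \<Rightarrow> 'g + 'a)
           (either_catch :: 'e + 'a \<Rightarrow> ('e \<Rightarrow> 'e + 'a) \<Rightarrow> 'e + 'a)"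
  using cmea_laws_exceptT[OF assms] cmea_laws_either by (rule conjI)

end
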